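(* Let $\alpha>0$. For $\theta\in[0,\pi]$ let $\lambda=\lambda(\theta;\alpha)\ge0$ satisfy $\cosh\lambda=1+\alpha-\alpha\cos\theta$, and define $$R_2(\alpha)=\frac{\alpha}{2\pi}\int_0^\pi\left(\frac{1}{\sinh\lambda}-\frac{1}{\sqrt{\alpha}\,\theta}\right)d\theta .$$ Then $$R_2(\alpha)=\frac{\sqrt{\alpha}}{4\pi}\ln\left(\frac{16}{\pi^2(\alpha+1)}\right).$$ *)

theory Defs
  imports "HOL-Analysis.Analysis"
begin

text \<open>lambda(theta; alpha): the unique nonnegative solution of
  cosh lambda = 1 + alpha - alpha cos theta (arcosh is the nonnegative branch).\<close>
definition lam :: "real \<Rightarrow> real \<Rightarrow> real" where
  "lam \<alpha> \<theta> = arcosh (1 + \<alpha> - \<alpha> * cos \<theta>)"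

definition R2_integrand :: "real \<Rightarrow> real \<Rightarrow> real" where
  "R2_integrand \<alpha> \<theta> = 1 / sinh (lam \<alpha> \<theta>) - 1 / (sqrt \<alpha> * \<theta>)"

definition R2 :: "real \<Rightarrow> real" where
  "R2 \<alpha> = \<alpha> / (2 * pi) * integral {0..pi} (R2_integrand \<alpha>)"

end

theory Submission
  imports Defs "HOL-Probability.Sinc_Integral"
begin

text \<open>With \<open>s = sin (\<theta>/2)\<close>, \<open>c = cos (\<theta>/2)\<close> and \<open>w = sqrt (1 + \<alpha> s\<^sup>2)\<close> one has
  \<open>cosh \<lambda> = 1 + 2 \<alpha> s\<^sup>2\<close>, hence \<open>sinh \<lambda> = 2 sqrt \<alpha> s w\<close>, and \<open>1 / sinh \<lambda>\<close> has the elementary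
  primitive \<open>(ln s - ln (w + c)) / sqrt \<alpha>\<close>. Subtracting \<open>ln \<theta> / sqrt \<alpha>\<close> and writing
  \<open>s / \<theta> = sinc (\<theta>/2) / 2\<close> gives a primitive of the integrand that is continuous on \<open>[0, pi]\<close>,
  so the improper-looking integral is just the difference of its values at \<open>pi\<close> and \<open>0\<close>.\<close>

lemma sinh_lam:
  assumes "\<alpha> \<ge> 0" and "sin (\<theta>/2) \<ge> 0"
  shows "sinh (lam \<alpha> \<theta>) = 2 * sqrt \<alpha> * sin (\<theta>/2) * sqrt (1 + \<alpha> * (sin (\<theta>/2))\<^sup>2)"
proof -
  define s where "s = sin (\<theta>/2)"
  have arg: "1 + \<alpha> - \<alpha> * cos \<theta> = 1 + 2 * \<alpha> * s\<^sup>2"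
    using cos_double_sin[of "\<theta>/2"] by (simp add: s_def right_diff_distrib)
  have "(2 * sqrt \<alpha> * s * sqrt (1 + \<alpha> * s\<^sup>2))\<^sup>2 = 4 * \<alpha> * s\<^sup>2 * (1 + \<alpha> * s\<^sup>2)"
    using assms(1) by (simp add: power_mult_distrib)
  then have "(1 + 2 * \<alpha> * s\<^sup>2)\<^sup>2 - 1 = (2 * sqrt \<alpha> * s * sqrt (1 + \<alpha> * s\<^sup>2))\<^sup>2"
    by (simp add: power2_eq_square algebra_simps)
  then have "sinh (lam \<alpha> \<theta>) = sqrt ((2 * sqrt \<alpha> * s * sqrt (1 + \<alpha> * s\<^sup>2))\<^sup>2)"
    using sinh_arcosh_real[of "1 + 2 * \<alpha> * s\<^sup>2"] assms(1) by (simp add: lam_def arg)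
  then show ?thesis
    using assms by (simp add: s_def)
qed

text \<open>The derivative of \<open>ln s - ln (w + c)\<close> in the notation above collapses to \<open>1 / (2 s w)\<close>.\<close>

lemma primitive_slope_identity:
  fixes s c w \<alpha> :: real
  assumes "w\<^sup>2 = 1 + \<alpha> * s\<^sup>2" and "s\<^sup>2 + c\<^sup>2 = 1" and "s \<noteq> 0" "w \<noteq> 0" "w + c \<noteq> 0"
  shows "c / (2 * s) - (\<alpha> * s * c / (2 * w) - s / 2) / (w + c) = 1 / (2 * s * w)"
proof -
  have "c / (2 * s) - (\<alpha> * s * c / (2 * w) - s / 2) / (w + c)
      = c / (2 * s) - s * (\<alpha> * c - w) / (2 * w * (w + c))"
    using assms(4) by (simp add: field_simps)
  also have "\<dots> = (c * (2 * w * (w + c)) - s * (\<alpha> * c - w) * (2 * s)) / (2 * s * (2 * w * (w + c)))"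
    using assms(3-5) by (simp add: diff_frac_eq)
  also have "c * (2 * w * (w + c)) - s * (\<alpha> * c - w) * (2 * s) = 2 * (w + c)"
    using assms(1,2) by algebra
  also have "2 * (w + c) / (2 * s * (2 * w * (w + c))) = 2 * (w + c) / (2 * (w + c) * (2 * s * w))"
    by (simp add: ac_simps)
  also have "\<dots> = 1 / (2 * s * w)"
    using assms(5) by (simp del: mult_2)
  finally show ?thesis .
qed

definition R2_primitive :: "real \<Rightarrow> real \<Rightarrow> real" where
  "R2_primitive \<alpha> \<theta> =
     (ln (sinc (\<theta>/2) / 2) - ln (sqrt (1 + \<alpha> * (sin (\<theta>/2))\<^sup>2) + cos (\<theta>/2))) / sqrt \<alpha>"

lemma has_real_derivative_R2_primitive:
  assumes "\<alpha> > 0" and "\<theta> \<in> {0<..<pi}"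
  shows "(R2_primitive \<alpha> has_real_derivative R2_integrand \<alpha> \<theta>) (at \<theta>)"
proof -
  define s c w where "s = sin (\<theta>/2)" and "c = cos (\<theta>/2)" and "w = sqrt (1 + \<alpha> * s\<^sup>2)"
  have "s > 0" "c > 0"
    using assms(2) by (auto simp: s_def c_def intro!: sin_gt_zero cos_gt_zero)
  have "w \<ge> 1"
    using assms(1) by (simp add: w_def)
  have "1 + \<alpha> * s\<^sup>2 > 0" "w + c > 0"
    using assms(1) \<open>w \<ge> 1\<close> \<open>c > 0\<close> by (auto intro: add_pos_nonneg)
  let ?N = "\<lambda>x. ln (sin (x/2)) - ln x - ln (sqrt (1 + \<alpha> * (sin (x/2))\<^sup>2) + cos (x/2))"
  have "w\<^sup>2 = 1 + \<alpha> * s\<^sup>2" "s\<^sup>2 + c\<^sup>2 = 1"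
    using \<open>1 + \<alpha> * s\<^sup>2 > 0\<close> by (simp_all add: w_def s_def c_def)
  then have slope: "c / (2 * s) - 1 / \<theta> - (\<alpha> * s * c / (2 * w) - s / 2) / (w + c) = 1 / (2 * s * w) - 1 / \<theta>"
    using primitive_slope_identity[of w \<alpha> s c] \<open>s > 0\<close> \<open>w \<ge> 1\<close> \<open>w + c > 0\<close> by simp
  have "(?N has_real_derivative c / (2 * s) - 1 / \<theta> - (\<alpha> * s * c / (2 * w) - s / 2) / (w + c)) (at \<theta>)"
    using \<open>s > 0\<close> \<open>1 + \<alpha> * s\<^sup>2 > 0\<close> \<open>w + c > 0\<close> assms(2) unfolding s_def c_def w_def
    by (auto intro!: derivative_eq_intros) (simp add: field_simps)
  then have "((\<lambda>x. ?N x / sqrt \<alpha>) has_real_derivative (1 / (2 * s * w) - 1 / \<theta>) / sqrt \<alpha>) (at \<theta>)"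
    unfolding slope by (rule DERIV_cdivide)
  also have "(1 / (2 * s * w) - 1 / \<theta>) / sqrt \<alpha> = R2_integrand \<alpha> \<theta>"
    using sinh_lam[of \<alpha> \<theta>] \<open>s > 0\<close> assms by (simp add: R2_integrand_def s_def w_def field_simps)
  finally show ?thesis
  proof (rule has_field_derivative_transform_within_open)
    fix x :: real assume "x \<in> {0<..<pi}"
    then have "sin (x/2) > 0"
      by (auto intro: sin_gt_zero)
    with \<open>x \<in> {0<..<pi}\<close> show "?N x / sqrt \<alpha> = R2_primitive \<alpha> x"
      by (simp add: R2_primitive_def ln_div)
  qed (use assms(2) in auto)
qed

lemma continuous_on_R2_primitive:
  assumes "\<alpha> > 0"
  shows "continuous_on {0..pi} (R2_primitive \<alpha>)"
proof -
  have sinc_ne: "sinc (\<theta>/2) / 2 \<noteq> 0" if "\<theta> \<in> {0..pi}" for \<theta>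
  proof (cases "\<theta> = 0")
    case False
    with that have "sin (\<theta>/2) > 0"
      by (intro sin_gt_zero) auto
    with False show ?thesis by simp
  qed simp
  have denom_ne: "sqrt (1 + \<alpha> * (sin (\<theta>/2))\<^sup>2) + cos (\<theta>/2) \<noteq> 0" if "\<theta> \<in> {0..pi}" for \<theta>
  proof -
    have "cos (\<theta>/2) \<ge> 0"
      using that by (intro cos_ge_zero) auto
    moreover have "sqrt (1 + \<alpha> * (sin (\<theta>/2))\<^sup>2) \<ge> 1"
      using assms by simp
    ultimately show ?thesis by linarith
  qed
  show ?thesis
    unfolding R2_primitive_def
    by (intro continuous_intros ballI) (erule sinc_ne denom_ne | use assms in simp)+
qed

lemma R2_primitive_0: "R2_primitive \<alpha> 0 = - 2 * ln 2 / sqrt \<alpha>"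
  by (simp add: R2_primitive_def ln_div)

lemma R2_primitive_pi:
  assumes "\<alpha> \<ge> 0"
  shows "R2_primitive \<alpha> pi = - (ln pi + ln (1 + \<alpha>) / 2) / sqrt \<alpha>"
  using assms by (simp add: R2_primitive_def ln_div ln_sqrt)

lemma has_integral_R2_integrand:
  assumes "\<alpha> > 0"
  shows "(R2_integrand \<alpha> has_integral ln (16 / (pi\<^sup>2 * (\<alpha> + 1))) / (2 * sqrt \<alpha>)) {0..pi}"
proof -
  have "(R2_integrand \<alpha> has_integral R2_primitive \<alpha> pi - R2_primitive \<alpha> 0) {0..pi}"
    using assms continuous_on_R2_primitive has_real_derivative_R2_primitive
    by (intro fundamental_theorem_of_calculus_interior) (auto simp: has_real_derivative_iff_has_vector_derivative)
  also have "R2_primitive \<alpha> pi - R2_primitive \<alpha> 0 = (4 * ln 2 - 2 * ln pi - ln (1 + \<alpha>)) / (2 * sqrt \<alpha>)"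
    using assms by (simp add: R2_primitive_pi R2_primitive_0 field_simps)
  also have "4 * ln 2 - 2 * ln pi - ln (1 + \<alpha>) = ln (16 / (pi\<^sup>2 * (\<alpha> + 1)))"
    using assms ln_realpow[of 2 4] ln_realpow[of pi 2] by (simp add: ln_div ln_mult)
  finally show ?thesis .
qed

theorem mainTheorem5:
  fixes \<alpha> :: real
  assumes "\<alpha> > 0"
  shows "R2_integrand \<alpha> integrable_on {0..pi}
    \<and> R2 \<alpha> = sqrt \<alpha> / (4 * pi) * ln (16 / (pi\<^sup>2 * (\<alpha> + 1)))"
proof
  show "R2_integrand \<alpha> integrable_on {0..pi}"
    using has_integral_R2_integrand[OF assms] by blast
  have "R2 \<alpha> = \<alpha> / (2 * pi) * (ln (16 / (pi\<^sup>2 * (\<alpha> + 1))) / (2 * sqrt \<alpha>))"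
    unfolding R2_def using has_integral_R2_integrand[OF assms] by (simp add: integral_unique)
  also have "\<dots> = sqrt \<alpha> / (4 * pi) * ln (16 / (pi\<^sup>2 * (\<alpha> + 1)))"
    using assms by (simp add: real_div_sqrt field_simps)
  finally show "R2 \<alpha> = sqrt \<alpha> / (4 * pi) * ln (16 / (pi\<^sup>2 * (\<alpha> + 1)))" .
qed

end
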